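(* Let $\Sigma \in \mathbb{R}^{3\times 3}$ be a symmetric positive definite matrix and let $\mathbf{c}_1,\dots,\mathbf{c}_\kappa \in \mathbb{R}^3$. For $k=1,\dots,\kappa$ define $\phi_k:\mathbb{R}^3\to\mathbb{R}$ by $\phi_k(\mathbf{x}) = \exp\!\big(-(\mathbf{x}-\mathbf{c}_k)^\top \Sigma^{-1}(\mathbf{x}-\mathbf{c}_k)\big)$, and let $\Phi:\mathbb{R}^3\to\mathbb{R}^\kappa$, $\Phi(\mathbf{x}) = [\phi_1(\mathbf{x}),\dots,\phi_\kappa(\mathbf{x})]^\top$. If the points $\mathbf{c}_1,\dots,\mathbf{c}_\kappa$ do not all lie in a common (affine) hyperplane of $\mathbb{R}^3$, then $\Phi$ is injective.
   Context: A hyperplane of $\mathbb{R}^3$ means a set of the form $\{\mathbf{c}\in\mathbb{R}^3 : \mathbf{b}^\top \mathbf{c} = a\}$ with $\mathbf{b}\in\mathbb{R}^3\setminus\{0\}$, $a\in\mathbb{R}$. *)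

theory Defs
  imports "HOL-Analysis.Analysis"
begin

definition sym_pos_def_mat :: "real^3^3 \<Rightarrow> bool" where
  "sym_pos_def_mat S \<longleftrightarrow> transpose S = S \<and> (\<forall>x::real^3. x \<noteq> 0 \<longrightarrow> x \<bullet> (S *v x) > 0)"

definition hyperplane3 :: "(real^3) set \<Rightarrow> bool" where
  "hyperplane3 H \<longleftrightarrow> (\<exists>b a. b \<noteq> 0 \<and> H = {c. b \<bullet> c = a})"

definition gauss_rbf :: "real^3^3 \<Rightarrow> real^3 \<Rightarrow> real^3 \<Rightarrow> real" where
  "gauss_rbf S c x = exp (- ((x - c) \<bullet> (matrix_inv S *v (x - c))))"

definition Phi :: "real^3^3 \<Rightarrow> (nat \<Rightarrow> real^3) \<Rightarrow> nat \<Rightarrow> real^3 \<Rightarrow> (nat \<Rightarrow> real)" where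
  "Phi S c \<kappa> x = (\<lambda>k. if k \<in> {1..\<kappa>} then gauss_rbf S (c k) x else 0)"

end

theory Submission
  imports Defs
begin

text \<open>If \<open>\<Phi> x = \<Phi> y\<close>, every centre \<open>c\<close> satisfies
  \<open>(x - c)\<^sup>T \<Sigma>\<^sup>-\<^sup>1 (x - c) = (y - c)\<^sup>T \<Sigma>\<^sup>-\<^sup>1 (y - c)\<close>. Expanding both sides, the quadratic
  terms in \<open>c\<close> cancel and what remains is the affine equation
  \<open>(2 \<Sigma>\<^sup>-\<^sup>1 (x - y))\<^sup>T c = x\<^sup>T \<Sigma>\<^sup>-\<^sup>1 x - y\<^sup>T \<Sigma>\<^sup>-\<^sup>1 y\<close>. Since \<open>\<Sigma>\<^sup>-\<^sup>1\<close> is injective, its normal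
  vector vanishes only if \<open>x = y\<close>; otherwise all centres lie in one hyperplane.\<close>

lemma pos_def_imp_invertible:
  fixes A :: "real^'n^'n"
  assumes "\<And>x. x \<noteq> 0 \<Longrightarrow> x \<bullet> (A *v x) > 0"
  shows "invertible A"
proof -
  have "x = 0" if "A *v x = 0" for x
    using assms[of x] that by (metis inner_zero_right less_irrefl)
  then show ?thesis
    using matrix_left_invertible_ker invertible_left_inverse by blast
qed

lemma sym_pos_def_mat_invertible: "sym_pos_def_mat S \<Longrightarrow> invertible S"
  unfolding sym_pos_def_mat_def using pos_def_imp_invertible by blast

lemma matrix_mult_matrix_inv:
  fixes A :: "'a::semiring_1^'n^'m"
  assumes "invertible A"
  shows "A ** matrix_inv A = mat 1" and "matrix_inv A ** A = mat 1"
  using someI_ex[OF assms[unfolded invertible_def]] by (auto simp: matrix_inv_def)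

lemma inj_matrix_inv_vector_mult:
  fixes A :: "'a::field^'n^'m"
  assumes "invertible A"
  shows "inj ((*v) (matrix_inv A))"
  using assms matrix_mult_matrix_inv[OF assms] invertible_def inj_matrix_vector_mult by blast

lemma symmetric_matrix_inv:
  fixes A :: "real^'n^'n"
  assumes "transpose A = A" and "invertible A"
  shows "transpose (matrix_inv A) = matrix_inv A"
proof -
  have "transpose (matrix_inv A) ** A = mat 1"
    using matrix_mult_matrix_inv(1)[OF assms(2)] assms(1) by (metis matrix_transpose_mul transpose_mat)
  then show ?thesis
    by (metis matrix_mult_matrix_inv[OF assms(2)] matrix_mul_assoc matrix_mul_lid matrix_mul_rid)
qed

lemma symmetric_inner_matrix_commute:
  fixes M :: "real^'n^'n"
  assumes "transpose M = M"
  shows "u \<bullet> (M *v v) = v \<bullet> (M *v u)"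
  by (metis assms dot_lmul_matrix inner_commute vector_transpose_matrix)

lemma symmetric_quadratic_form_diff:
  fixes M :: "real^'n^'n"
  assumes "transpose M = M"
  shows "(x - c) \<bullet> (M *v (x - c)) - (y - c) \<bullet> (M *v (y - c))
    = x \<bullet> (M *v x) - y \<bullet> (M *v y) - (2 *\<^sub>R (M *v (x - y))) \<bullet> c"
  using symmetric_inner_matrix_commute[OF assms, of x c] symmetric_inner_matrix_commute[OF assms, of y c]
  by (simp add: matrix_vector_mult_diff_distrib inner_diff_left inner_diff_right inner_commute[of _ c])

lemma gauss_rbf_eq_iff:
  assumes "sym_pos_def_mat S"
  shows "gauss_rbf S c x = gauss_rbf S c y \<longleftrightarrow>
    (2 *\<^sub>R (matrix_inv S *v (x - y))) \<bullet> c = x \<bullet> (matrix_inv S *v x) - y \<bullet> (matrix_inv S *v y)"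
proof -
  have "transpose S = S" and "invertible S"
    using assms sym_pos_def_mat_invertible unfolding sym_pos_def_mat_def by auto
  then have "transpose (matrix_inv S) = matrix_inv S"
    by (rule symmetric_matrix_inv)
  from symmetric_quadratic_form_diff[OF this, of x c y] show ?thesis
    by (auto simp: gauss_rbf_def)
qed

theorem mainTheorem1:
  fixes S :: "real^3^3" and c :: "nat \<Rightarrow> real^3" and \<kappa> :: nat
  assumes "sym_pos_def_mat S"
    and "\<not> (\<exists>H. hyperplane3 H \<and> (\<forall>k\<in>{1..\<kappa>}. c k \<in> H))"
  shows "inj (Phi S c \<kappa>)"
proof (rule injI, rule ccontr)
  fix x y
  assume "Phi S c \<kappa> x = Phi S c \<kappa> y" and "x \<noteq> y"
  define b where "b = 2 *\<^sub>R (matrix_inv S *v (x - y))"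
  define a where "a = x \<bullet> (matrix_inv S *v x) - y \<bullet> (matrix_inv S *v y)"
  have "b \<bullet> c k = a" if "k \<in> {1..\<kappa>}" for k
    using fun_cong[OF \<open>Phi S c \<kappa> x = Phi S c \<kappa> y\<close>, of k] that gauss_rbf_eq_iff[OF assms(1)]
    by (simp add: Phi_def a_def b_def)
  moreover have "b \<noteq> 0"
    using \<open>x \<noteq> y\<close> injD[OF inj_matrix_inv_vector_mult[OF sym_pos_def_mat_invertible[OF assms(1)]]]
    by (force simp: b_def matrix_vector_mult_diff_distrib)
  ultimately show False
    using assms(2) unfolding hyperplane3_def by blast
qed

end
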